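(* For every integer $n\ge 9$, $\mathrm{wdim}_4(K_n\times K_n)\le 2n+1+\lfloor n/4\rfloor$.
   Context: $K_n\times K_n$ is the direct product of two complete graphs on $n$ vertices: vertex set $[n]\times[n]$ with $[n]=\{1,\dots,n\}$, and $(i,j)$ adjacent to $(i',j')$ iff $i\ne i'$ and $j\ne j'$. For a connected graph $G$ with distance $d_G$, vertices $x,y,z$ and $S\subseteq V(G)$, let $\Delta_z(x,y)=|d_G(x,z)-d_G(y,z)|$ and $\Delta_S(x,y)=\sum_{z\in S}\Delta_z(x,y)$. A set $S$ is a weak $k$-resolving set if $\Delta_S(x,y)\ge k$ for all distinct $x,y\in V(G)$, and $\mathrm{wdim}_k(G)$ is the minimum cardinality of a weak $k$-resolving set of $G$. *)

theory Defs
  imports Main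
begin

text \<open>A graph is given by a vertex set V and an adjacency relation E.
  The distance is the length of a shortest walk inside V (the graphs used
  here are connected, so the LEAST exists).\<close>

definition adjV :: "'a set \<Rightarrow> ('a \<Rightarrow> 'a \<Rightarrow> bool) \<Rightarrow> 'a \<Rightarrow> 'a \<Rightarrow> bool" where
  "adjV V E x y \<longleftrightarrow> x \<in> V \<and> y \<in> V \<and> E x y"

definition gdist :: "'a set \<Rightarrow> ('a \<Rightarrow> 'a \<Rightarrow> bool) \<Rightarrow> 'a \<Rightarrow> 'a \<Rightarrow> nat" where
  "gdist V E x y = (LEAST k. ((adjV V E) ^^ k) x y)"

definition Delta :: "'a set \<Rightarrow> ('a \<Rightarrow> 'a \<Rightarrow> bool) \<Rightarrow> 'a set \<Rightarrow> 'a \<Rightarrow> 'a \<Rightarrow> int" where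
  "Delta V E S x y = (\<Sum>z\<in>S. \<bar>int (gdist V E x z) - int (gdist V E y z)\<bar>)"

definition weak_k_resolving :: "'a set \<Rightarrow> ('a \<Rightarrow> 'a \<Rightarrow> bool) \<Rightarrow> nat \<Rightarrow> 'a set \<Rightarrow> bool" where
  "weak_k_resolving V E k S \<longleftrightarrow> S \<subseteq> V \<and>
     (\<forall>x\<in>V. \<forall>y\<in>V. x \<noteq> y \<longrightarrow> Delta V E S x y \<ge> int k)"

definition wdim :: "'a set \<Rightarrow> ('a \<Rightarrow> 'a \<Rightarrow> bool) \<Rightarrow> nat \<Rightarrow> nat" where
  "wdim V E k = (LEAST m. \<exists>S. weak_k_resolving V E k S \<and> card S = m)"

definition KxK_V :: "nat \<Rightarrow> (nat \<times> nat) set" where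
  "KxK_V n = {1..n} \<times> {1..n}"

definition KxK_E :: "(nat \<times> nat) \<Rightarrow> (nat \<times> nat) \<Rightarrow> bool" where
  "KxK_E p q \<longleftrightarrow> fst p \<noteq> fst q \<and> snd p \<noteq> snd q"

end

theory Submission
  imports Defs
begin

(* Distances in K_n x K_n are 0, 1 and 2, and a point z other than x is at distance 2 from x
   exactly when it lies on the row or on the column of x. So for x = (i,j) and y = (i',j') with
   i ~= i' and j ~= j' the points of S on the four lines through x and y are what contributes to
   Delta_S(x,y), except the corners (i,j') and (i',j), which see x and y at the same distance
   (if x and y share a row, the points on their two columns contribute). Hence S is weakly
   4-resolving as soon as every line carries two points of S and each corner configuration inside
   S is paid for by lines carrying three points.

   With m = n div 2, let sigma cycle {1..m} and {m+1..n} separately. The diagonal together with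
   the graph of sigma has two points on every line and, as sigma has no 2-cycles, contains no
   rectangle; the corners it does contain lie on two rows k, sigma k and on the two columns
   i, sigma i, all in one half. About n/4 further points (min c m, m + c), c odd, put a third point
   on every odd row of the first half and on every column m + c, c odd, of the second half, and of
   two consecutive indices in a cycle one is odd. *)

lemma gdist_self: "gdist V E x x = 0"
  unfolding gdist_def by (simp add: Least_eq_0)

lemma gdist_adj:
  assumes "x \<noteq> y" and "adjV V E x y"
  shows "gdist V E x y = 1"
  unfolding gdist_def
proof (rule Least_equality)
  show "(adjV V E ^^ 1) x y" using assms(2) by (simp only: relpowp_1)
  fix k assume "(adjV V E ^^ k) x y"
  then show "1 \<le> k" using assms(1) by (cases k) auto
qed

lemma gdist_common_neighbour:
  assumes "x \<noteq> y" and "\<not> adjV V E x y" and "adjV V E x w" and "adjV V E w y"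
  shows "gdist V E x y = 2"
  unfolding gdist_def
proof (rule Least_equality)
  show "(adjV V E ^^ 2) x y" using assms(3,4) by (auto simp: numeral_2_eq_2)
  fix k assume "(adjV V E ^^ k) x y"
  then show "2 \<le> k" using assms(1,2) by (cases k; cases "k - 1") auto
qed

lemma wdim_le_card:
  assumes "weak_k_resolving V E k S"
  shows "wdim V E k \<le> card S"
  unfolding wdim_def using assms by (intro Least_le) blast

definition KxK_dist :: "nat \<times> nat \<Rightarrow> nat \<times> nat \<Rightarrow> nat" where
  "KxK_dist x y = (if x = y then 0 else if KxK_E x y then 1 else 2)"

lemma ex_atLeastAtMost_avoiding_two:
  assumes "3 \<le> n"
  shows "\<exists>e\<in>{1..n}. e \<noteq> a \<and> e \<noteq> (b::nat)"
proof -
  have "\<exists>e\<in>{1,2,3}. e \<noteq> a \<and> e \<noteq> b" by auto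
  then show ?thesis using assms by auto
qed

lemma gdist_KxK:
  assumes "3 \<le> n" and x: "x \<in> KxK_V n" and y: "y \<in> KxK_V n"
  shows "gdist (KxK_V n) KxK_E x y = KxK_dist x y"
proof -
  consider "x = y" | "x \<noteq> y" "KxK_E x y" | "x \<noteq> y" "\<not> KxK_E x y" by blast
  then show ?thesis
  proof cases
    case 1
    then show ?thesis by (simp add: gdist_self KxK_dist_def)
  next
    case 2
    then show ?thesis using x y by (simp add: gdist_adj adjV_def KxK_dist_def)
  next
    case 3
    obtain a b c d where xy: "x = (a, b)" "y = (c, d)" by fastforce
    obtain e where e: "e \<in> {1..n}" "e \<noteq> a" "e \<noteq> c"
      using ex_atLeastAtMost_avoiding_two[OF \<open>3 \<le> n\<close>] by blast
    obtain f where f: "f \<in> {1..n}" "f \<noteq> b" "f \<noteq> d"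
      using ex_atLeastAtMost_avoiding_two[OF \<open>3 \<le> n\<close>] by blast
    have "adjV (KxK_V n) KxK_E x (e, f)" "adjV (KxK_V n) KxK_E (e, f) y"
      using x y xy e f by (auto simp: adjV_def KxK_E_def KxK_V_def)
    moreover have "\<not> adjV (KxK_V n) KxK_E x y" using 3 by (simp add: adjV_def)
    ultimately show ?thesis using 3 by (simp add: gdist_common_neighbour KxK_dist_def)
  qed
qed

definition row_count :: "(nat \<times> nat) set \<Rightarrow> nat \<Rightarrow> nat" where
  "row_count S i = card {z \<in> S. fst z = i}"

definition col_count :: "(nat \<times> nat) set \<Rightarrow> nat \<Rightarrow> nat" where
  "col_count S j = card {z \<in> S. snd z = j}"

definition lines_count :: "(nat \<times> nat) set \<Rightarrow> nat \<times> nat \<Rightarrow> nat \<times> nat \<Rightarrow> nat" where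
  "lines_count S x y =
     row_count S (fst x) + row_count S (fst y) + col_count S (snd x) + col_count S (snd y)"

lemma lines_count_commute: "lines_count S x y = lines_count S y x"
  by (simp add: lines_count_def)

lemma sum_of_bool_fst_eq_row_count:
  "finite S \<Longrightarrow> (\<Sum>z\<in>S. of_bool (fst z = i) :: int) = int (row_count S i)"
  by (simp add: row_count_def Collect_conj_eq)

lemma sum_of_bool_snd_eq_col_count:
  "finite S \<Longrightarrow> (\<Sum>z\<in>S. of_bool (snd z = j) :: int) = int (col_count S j)"
  by (simp add: col_count_def Collect_conj_eq)

lemma sum_of_bool_eq_member:
  "finite S \<Longrightarrow> (\<Sum>z\<in>S. of_bool (z = p) :: int) = of_bool (p \<in> S)"
  by simp

lemma finite_KxK_V: "finite (KxK_V n)"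
  by (simp add: KxK_V_def)

lemma Delta_KxK:
  assumes "3 \<le> n" and "S \<subseteq> KxK_V n" and "x \<in> KxK_V n" and "y \<in> KxK_V n"
  shows "Delta (KxK_V n) KxK_E S x y = (\<Sum>z\<in>S. \<bar>int (KxK_dist x z) - int (KxK_dist y z)\<bar>)"
  unfolding Delta_def using assms by (intro sum.cong) (auto simp: gdist_KxK)

lemma Delta_KxK_same_row:
  assumes "3 \<le> n" and S: "S \<subseteq> KxK_V n" and "(i, j) \<in> KxK_V n" "(i, j') \<in> KxK_V n" and "j \<noteq> j'"
  shows "int (col_count S j + col_count S j') \<le> Delta (KxK_V n) KxK_E S (i, j) (i, j')"
proof -
  have fin: "finite S" using S finite_subset finite_KxK_V by blast
  have "int (col_count S j + col_count S j') = (\<Sum>z\<in>S. of_bool (snd z = j) + of_bool (snd z = j'))"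
    using fin by (simp only: of_nat_add sum.distrib sum_of_bool_snd_eq_col_count)
  also have "\<dots> \<le> (\<Sum>z\<in>S. \<bar>int (KxK_dist (i, j) z) - int (KxK_dist (i, j') z)\<bar>)"
    using \<open>j \<noteq> j'\<close> by (intro sum_mono) (auto simp: KxK_dist_def KxK_E_def)
  finally show ?thesis using Delta_KxK assms by simp
qed

lemma Delta_KxK_same_col:
  assumes "3 \<le> n" and S: "S \<subseteq> KxK_V n" and "(i, j) \<in> KxK_V n" "(i', j) \<in> KxK_V n" and "i \<noteq> i'"
  shows "int (row_count S i + row_count S i') \<le> Delta (KxK_V n) KxK_E S (i, j) (i', j)"
proof -
  have fin: "finite S" using S finite_subset finite_KxK_V by blast
  have "int (row_count S i + row_count S i') = (\<Sum>z\<in>S. of_bool (fst z = i) + of_bool (fst z = i'))"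
    using fin by (simp only: of_nat_add sum.distrib sum_of_bool_fst_eq_row_count)
  also have "\<dots> \<le> (\<Sum>z\<in>S. \<bar>int (KxK_dist (i, j) z) - int (KxK_dist (i', j) z)\<bar>)"
    using \<open>i \<noteq> i'\<close> by (intro sum_mono) (auto simp: KxK_dist_def KxK_E_def)
  finally show ?thesis using Delta_KxK assms by simp
qed

(* The corners (i,j') and (i',j) contribute nothing although lines_count counts them twice;
   x and y contribute 1 and are counted twice. *)
lemma Delta_KxK_ge_lines_count:
  assumes "3 \<le> n" and S: "S \<subseteq> KxK_V n" and "(i, j) \<in> KxK_V n" "(i', j') \<in> KxK_V n"
    and "i \<noteq> i'" and "j \<noteq> j'"
  shows "int (lines_count S (i, j) (i', j'))
           - 2 * of_bool ((i, j') \<in> S) - 2 * of_bool ((i', j) \<in> S)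
           - of_bool ((i, j) \<in> S) - of_bool ((i', j') \<in> S)
         \<le> Delta (KxK_V n) KxK_E S (i, j) (i', j')"
proof -
  have fin: "finite S" using S finite_subset finite_KxK_V by blast
  have "int (lines_count S (i, j) (i', j'))
           - 2 * of_bool ((i, j') \<in> S) - 2 * of_bool ((i', j) \<in> S)
           - of_bool ((i, j) \<in> S) - of_bool ((i', j') \<in> S)
        = (\<Sum>z\<in>S. of_bool (fst z = i) + of_bool (fst z = i')
             + of_bool (snd z = j) + of_bool (snd z = j')
             - 2 * of_bool (z = (i, j')) - 2 * of_bool (z = (i', j))
             - of_bool (z = (i, j)) - of_bool (z = (i', j')))"
    using fin by (simp only: lines_count_def fst_conv snd_conv of_nat_add sum.distrib sum_subtractf
        sum_distrib_left[symmetric] sum_of_bool_fst_eq_row_count sum_of_bool_snd_eq_col_count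
        sum_of_bool_eq_member)
  also have "\<dots> \<le> (\<Sum>z\<in>S. \<bar>int (KxK_dist (i, j) z) - int (KxK_dist (i', j') z)\<bar>)"
    using \<open>i \<noteq> i'\<close> \<open>j \<noteq> j'\<close> by (intro sum_mono) (auto simp: KxK_dist_def KxK_E_def)
  finally show ?thesis using Delta_KxK assms by simp
qed

lemma weak_4_resolving_KxKI:
  assumes n: "3 \<le> n" and S: "S \<subseteq> KxK_V n"
    and rows: "\<And>i. i \<in> {1..n} \<Longrightarrow> 2 \<le> row_count S i"
    and cols: "\<And>j. j \<in> {1..n} \<Longrightarrow> 2 \<le> col_count S j"
    and corner: "\<And>i i' j j'. (i, j) \<in> S \<Longrightarrow> (i, j') \<in> S \<Longrightarrow> (i', j) \<in> S \<Longrightarrow>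
                   i \<noteq> i' \<Longrightarrow> j \<noteq> j' \<Longrightarrow> 9 \<le> lines_count S (i, j) (i', j')"
    and rectangle: "\<And>i i' j j'. (i, j) \<in> S \<Longrightarrow> (i, j') \<in> S \<Longrightarrow> (i', j) \<in> S \<Longrightarrow> (i', j') \<in> S \<Longrightarrow>
                   i \<noteq> i' \<Longrightarrow> j \<noteq> j' \<Longrightarrow> 10 \<le> lines_count S (i, j) (i', j')"
  shows "weak_k_resolving (KxK_V n) KxK_E 4 S"
  unfolding weak_k_resolving_def
proof (intro conjI ballI impI)
  show "S \<subseteq> KxK_V n" by (rule S)
  fix x y assume x: "x \<in> KxK_V n" and y: "y \<in> KxK_V n" and "x \<noteq> y"
  obtain i j i' j' where xy: "x = (i, j)" "y = (i', j')" by fastforce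
  have ij: "i \<in> {1..n}" "j \<in> {1..n}" "i' \<in> {1..n}" "j' \<in> {1..n}"
    using x y xy by (auto simp: KxK_V_def)
  consider "i = i'" "j \<noteq> j'" | "i \<noteq> i'" "j = j'" | "i \<noteq> i'" "j \<noteq> j'"
    using \<open>x \<noteq> y\<close> xy by blast
  then show "int 4 \<le> Delta (KxK_V n) KxK_E S x y"
  proof cases
    case 1
    then show ?thesis
      using Delta_KxK_same_row[OF n S] x y xy cols[OF ij(2)] cols[OF ij(4)] by fastforce
  next
    case 2
    then show ?thesis
      using Delta_KxK_same_col[OF n S] x y xy rows[OF ij(1)] rows[OF ij(3)] by fastforce
  next
    case 3
    have "4 + 2 * of_bool ((i, j') \<in> S) + 2 * of_bool ((i', j) \<in> S)
            + of_bool ((i, j) \<in> S) + of_bool ((i', j') \<in> S)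
          \<le> int (lines_count S (i, j) (i', j'))"
    proof -
      have "8 \<le> lines_count S (i, j) (i', j')"
        using rows[OF ij(1)] rows[OF ij(3)] cols[OF ij(2)] cols[OF ij(4)]
        by (simp add: lines_count_def)
      moreover have "(i, j) \<in> S \<Longrightarrow> (i, j') \<in> S \<Longrightarrow> (i', j) \<in> S \<Longrightarrow> 9 \<le> lines_count S (i, j) (i', j')"
        using corner 3 by blast
      moreover have "(i', j') \<in> S \<Longrightarrow> (i', j) \<in> S \<Longrightarrow> (i, j') \<in> S \<Longrightarrow> 9 \<le> lines_count S (i, j) (i', j')"
        using corner[of i' j' j i] 3 by (simp add: lines_count_commute)
      moreover have "(i, j) \<in> S \<Longrightarrow> (i, j') \<in> S \<Longrightarrow> (i', j) \<in> S \<Longrightarrow> (i', j') \<in> S \<Longrightarrow>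
                     10 \<le> lines_count S (i, j) (i', j')"
        using rectangle 3 by blast
      ultimately show ?thesis by (auto simp: of_bool_def)
    qed
    then show ?thesis using Delta_KxK_ge_lines_count[OF n S] x y xy 3 by fastforce
  qed
qed

definition block_succ :: "nat \<Rightarrow> nat \<Rightarrow> nat" where
  "block_succ n i = (if i = n div 2 then 1 else if i = n then n div 2 + 1 else i + 1)"

definition block_pred :: "nat \<Rightarrow> nat \<Rightarrow> nat" where
  "block_pred n j = (if j = 1 then n div 2 else if j = n div 2 + 1 then n else j - 1)"

context
  fixes n :: nat
  assumes n: "6 \<le> n"
begin

lemma block_succ_in_range: "i \<in> {1..n} \<Longrightarrow> block_succ n i \<in> {1..n}"
  using n by (auto simp: block_succ_def)

lemma block_pred_in_range: "j \<in> {1..n} \<Longrightarrow> block_pred n j \<in> {1..n}"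
  using n by (auto simp: block_pred_def)

lemma block_succ_neq: "i \<in> {1..n} \<Longrightarrow> block_succ n i \<noteq> i"
  using n by (auto simp: block_succ_def)

lemma block_pred_neq: "j \<in> {1..n} \<Longrightarrow> block_pred n j \<noteq> j"
  using n by (auto simp: block_pred_def)

lemma block_succ_block_succ_neq: "i \<in> {1..n} \<Longrightarrow> block_succ n (block_succ n i) \<noteq> i"
  using n by (auto simp: block_succ_def)

lemma block_succ_pred: "j \<in> {1..n} \<Longrightarrow> block_succ n (block_pred n j) = j"
  using n by (auto simp: block_succ_def block_pred_def)

lemma block_pred_succ: "i \<in> {1..n} \<Longrightarrow> block_pred n (block_succ n i) = i"
  using n by (auto simp: block_succ_def block_pred_def)

lemma block_succ_le_half_iff: "i \<in> {1..n} \<Longrightarrow> block_succ n i \<le> n div 2 \<longleftrightarrow> i \<le> n div 2"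
  using n by (auto simp: block_succ_def)

lemma block_pred_le_half_iff: "j \<in> {1..n} \<Longrightarrow> block_pred n j \<le> n div 2 \<longleftrightarrow> j \<le> n div 2"
  using n by (auto simp: block_pred_def)

lemma odd_or_odd_block_succ_low:
  "1 \<le> i \<Longrightarrow> i \<le> n div 2 \<Longrightarrow> odd i \<or> odd (block_succ n i)"
  using n by (auto simp: block_succ_def)

lemma odd_or_odd_block_succ_high:
  "n div 2 < i \<Longrightarrow> i \<le> n \<Longrightarrow> odd (i - n div 2) \<or> odd (block_succ n i - n div 2)"
  using n by (auto simp: block_succ_def)

end

lemma card_odd_atLeastAtMost_le: "card {c \<in> {1..N::nat}. odd c} \<le> (N + 1) div 2"
proof -
  have "{c \<in> {1..N}. odd c} \<subseteq> (\<lambda>t. 2 * t + 1) ` {..< (N + 1) div 2}"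
  proof
    fix c assume "c \<in> {c \<in> {1..N}. odd c}"
    then obtain t where "c = 2 * t + 1" "c \<le> N" by (auto elim: oddE)
    then show "c \<in> (\<lambda>t. 2 * t + 1) ` {..< (N + 1) div 2}" by auto
  qed
  then have "card {c \<in> {1..N}. odd c} \<le> card ((\<lambda>t. 2 * t + 1) ` {..< (N + 1) div 2})"
    by (intro card_mono) auto
  also have "\<dots> \<le> (N + 1) div 2"
    using card_image_le[of "{..< (N + 1) div 2}"] by simp
  finally show ?thesis .
qed

definition cycle_points :: "nat \<Rightarrow> (nat \<times> nat) set" where
  "cycle_points n = {(i, j). i \<in> {1..n} \<and> (j = i \<or> j = block_succ n i)}"

definition extra_points :: "nat \<Rightarrow> (nat \<times> nat) set" where
  "extra_points n = (\<lambda>c. (min c (n div 2), n div 2 + c)) ` {c \<in> {1..n - n div 2}. odd c}"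

definition KxK_resolving_set :: "nat \<Rightarrow> (nat \<times> nat) set" where
  "KxK_resolving_set n = cycle_points n \<union> extra_points n"

lemma card_KxK_resolving_set: "card (KxK_resolving_set n) \<le> 2 * n + 1 + n div 4"
proof -
  have "cycle_points n = (\<lambda>i. (i, i)) ` {1..n} \<union> (\<lambda>i. (i, block_succ n i)) ` {1..n}"
    by (auto simp: cycle_points_def)
  then have "card (cycle_points n) \<le> 2 * n"
    using card_Un_le[of "(\<lambda>i. (i, i)) ` {1..n}" "(\<lambda>i. (i, block_succ n i)) ` {1..n}"]
      card_image_le[of "{1..n}" "\<lambda>i. (i, i)"] card_image_le[of "{1..n}" "\<lambda>i. (i, block_succ n i)"]
    by simp
  moreover have "card (extra_points n) \<le> (n - n div 2 + 1) div 2"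
  proof -
    have "card (extra_points n) \<le> card {c \<in> {1..n - n div 2}. odd c}"
      unfolding extra_points_def by (rule card_image_le) simp
    also have "\<dots> \<le> (n - n div 2 + 1) div 2"
      by (rule card_odd_atLeastAtMost_le)
    finally show ?thesis .
  qed
  moreover have "(n - n div 2 + 1) div 2 \<le> n div 4 + 1"
    by linarith
  ultimately show ?thesis
    using card_Un_le[of "cycle_points n" "extra_points n"] by (simp add: KxK_resolving_set_def)
qed

context
  fixes n :: nat
  assumes n: "6 \<le> n"
begin

lemma extra_points_bounds:
  "(a, b) \<in> extra_points n \<Longrightarrow> 1 \<le> a \<and> a \<le> n div 2 \<and> n div 2 < b \<and> b \<le> n"
  unfolding extra_points_def using n by auto

lemma KxK_resolving_set_subset: "KxK_resolving_set n \<subseteq> KxK_V n"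
proof -
  have "cycle_points n \<subseteq> KxK_V n"
    using block_succ_in_range[OF n] unfolding cycle_points_def KxK_V_def by blast
  moreover have "extra_points n \<subseteq> KxK_V n"
    using extra_points_bounds by (fastforce simp: KxK_V_def)
  ultimately show ?thesis by (simp add: KxK_resolving_set_def)
qed

lemma finite_KxK_resolving_set: "finite (KxK_resolving_set n)"
  using KxK_resolving_set_subset finite_KxK_V finite_subset by blast

lemma extra_point_in_row:
  "odd r \<Longrightarrow> 1 \<le> r \<Longrightarrow> r \<le> n div 2 \<Longrightarrow> (r, n div 2 + r) \<in> extra_points n"
  unfolding extra_points_def by (rule image_eqI[of _ _ r]) auto

lemma extra_point_in_col:
  "odd (c - n div 2) \<Longrightarrow> n div 2 < c \<Longrightarrow> c \<le> n \<Longrightarrow>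
   (min (c - n div 2) (n div 2), c) \<in> extra_points n"
  unfolding extra_points_def by (rule image_eqI[of _ _ "c - n div 2"]) auto

lemma KxK_resolving_set_row_count_ge_2:
  "i \<in> {1..n} \<Longrightarrow> 2 \<le> row_count (KxK_resolving_set n) i"
proof -
  assume i: "i \<in> {1..n}"
  have "{(i, i), (i, block_succ n i)} \<subseteq> {z \<in> KxK_resolving_set n. fst z = i}"
    using i by (auto simp: KxK_resolving_set_def cycle_points_def)
  then have "card {(i, i), (i, block_succ n i)} \<le> row_count (KxK_resolving_set n) i"
    unfolding row_count_def by (rule card_mono[rotated]) (simp add: finite_KxK_resolving_set)
  then show ?thesis using block_succ_neq[OF n i] by simp
qed

lemma KxK_resolving_set_col_count_ge_2:
  "j \<in> {1..n} \<Longrightarrow> 2 \<le> col_count (KxK_resolving_set n) j"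
proof -
  assume j: "j \<in> {1..n}"
  have "{(j, j), (block_pred n j, j)} \<subseteq> {z \<in> KxK_resolving_set n. snd z = j}"
    using j block_pred_in_range[OF n j] block_succ_pred[OF n j]
    by (auto simp: KxK_resolving_set_def cycle_points_def)
  then have "card {(j, j), (block_pred n j, j)} \<le> col_count (KxK_resolving_set n) j"
    unfolding col_count_def by (rule card_mono[rotated]) (simp add: finite_KxK_resolving_set)
  then show ?thesis using block_pred_neq[OF n j] by simp
qed

lemma extra_point_line_counts_ge_3:
  assumes "(a, b) \<in> extra_points n"
  shows "3 \<le> row_count (KxK_resolving_set n) a \<and> 3 \<le> col_count (KxK_resolving_set n) b"
proof
  have ab: "a \<in> {1..n}" "b \<in> {1..n}" "a \<le> n div 2" "n div 2 < b"
    using extra_points_bounds[OF assms] by auto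
  have "{(a, a), (a, block_succ n a), (a, b)} \<subseteq> {z \<in> KxK_resolving_set n. fst z = a}"
    using ab assms by (auto simp: KxK_resolving_set_def cycle_points_def)
  then have "card {(a, a), (a, block_succ n a), (a, b)} \<le> row_count (KxK_resolving_set n) a"
    unfolding row_count_def by (rule card_mono[rotated]) (simp add: finite_KxK_resolving_set)
  moreover have "block_succ n a \<noteq> b"
    using block_succ_le_half_iff[OF n ab(1)] ab by auto
  ultimately show "3 \<le> row_count (KxK_resolving_set n) a"
    using block_succ_neq[OF n ab(1)] ab by auto
  have "{(b, b), (block_pred n b, b), (a, b)} \<subseteq> {z \<in> KxK_resolving_set n. snd z = b}"
    using ab assms block_pred_in_range[OF n ab(2)] block_succ_pred[OF n ab(2)]
    by (auto simp: KxK_resolving_set_def cycle_points_def)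
  then have "card {(b, b), (block_pred n b, b), (a, b)} \<le> col_count (KxK_resolving_set n) b"
    unfolding col_count_def by (rule card_mono[rotated]) (simp add: finite_KxK_resolving_set)
  moreover have "block_pred n b \<noteq> a"
    using block_pred_le_half_iff[OF n ab(2)] ab by auto
  ultimately show "3 \<le> col_count (KxK_resolving_set n) b"
    using block_pred_neq[OF n ab(2)] ab by auto
qed

lemma cycle_points_corner_shape:
  assumes "(i, j) \<in> cycle_points n" "(i, j') \<in> cycle_points n" "(i', j) \<in> cycle_points n"
    and "i \<noteq> i'" "j \<noteq> j'"
  shows "{j, j'} = {i, block_succ n i}" and "\<exists>k\<in>{1..n}. {i, i'} = {k, block_succ n k}"
proof -
  have i: "i \<in> {1..n}" and i': "i' \<in> {1..n}"
    using assms(1,3) by (auto simp: cycle_points_def)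
  show "{j, j'} = {i, block_succ n i}"
    using assms(1,2,5) by (auto simp: cycle_points_def)
  have "j = i \<or> j = block_succ n i" "j = i' \<or> j = block_succ n i'"
    using assms(1,3) by (auto simp: cycle_points_def)
  then have "i = block_succ n i' \<or> i' = block_succ n i"
    using assms(4) block_pred_succ[OF n i] block_pred_succ[OF n i'] by metis
  then show "\<exists>k\<in>{1..n}. {i, i'} = {k, block_succ n k}"
    using i i' by blast
qed

lemma cycle_points_corner_line_ge_3:
  assumes "(i, j) \<in> cycle_points n" "(i, j') \<in> cycle_points n" "(i', j) \<in> cycle_points n"
    and "i \<noteq> i'" "j \<noteq> j'"
  shows "3 \<le> row_count (KxK_resolving_set n) i \<or> 3 \<le> row_count (KxK_resolving_set n) i'
       \<or> 3 \<le> col_count (KxK_resolving_set n) j \<or> 3 \<le> col_count (KxK_resolving_set n) j'"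
proof -
  have i: "i \<in> {1..n}" using assms(1) by (simp add: cycle_points_def)
  obtain k where k: "k \<in> {1..n}" and rows: "{i, i'} = {k, block_succ n k}"
    using cycle_points_corner_shape[OF assms] by blast
  have cols: "{j, j'} = {i, block_succ n i}"
    using cycle_points_corner_shape[OF assms] by blast
  show ?thesis
  proof (cases "i \<le> n div 2")
    case True
    moreover have "i \<in> {k, block_succ n k}" using rows by blast
    ultimately have "k \<le> n div 2" using block_succ_le_half_iff[OF n k] by blast
    then obtain r where "r \<in> {i, i'}" "odd r" "1 \<le> r" "r \<le> n div 2"
      using odd_or_odd_block_succ_low[OF n] block_succ_le_half_iff[OF n k] k rows by force
    then show ?thesis
      using extra_point_line_counts_ge_3[OF extra_point_in_row] by blast
  next
    case False
    have "block_succ n i \<in> {1..n}" "n div 2 < block_succ n i"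
      using False block_succ_in_range[OF n i] block_succ_le_half_iff[OF n i] by auto
    then obtain c where "c \<in> {j, j'}" "odd (c - n div 2)" "n div 2 < c" "c \<le> n"
      using odd_or_odd_block_succ_high[OF n, of i] False i cols by force
    then show ?thesis
      using extra_point_line_counts_ge_3[OF extra_point_in_col] by blast
  qed
qed

lemma cycle_points_no_rectangle:
  assumes "(i, j) \<in> cycle_points n" "(i, j') \<in> cycle_points n"
    and "(i', j) \<in> cycle_points n" "(i', j') \<in> cycle_points n"
    and "i \<noteq> i'" "j \<noteq> j'"
  shows False
proof -
  have i: "i \<in> {1..n}" using assms(1) by (simp add: cycle_points_def)
  have "{j, j'} = {i, block_succ n i}"
    using cycle_points_corner_shape[OF assms(1-3,5,6)] by blast
  moreover have "{j', j} = {i', block_succ n i'}"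
    using cycle_points_corner_shape[OF assms(4,3,2)] assms(5,6) by blast
  ultimately have "i = block_succ n i'" "i' = block_succ n i"
    using assms(5) by (auto simp: doubleton_eq_iff)
  then show False using block_succ_block_succ_neq[OF n i] by simp
qed

lemma lines_count_ge_10_if_extra_corner:
  assumes "i \<in> {1..n}" "i' \<in> {1..n}" "j \<in> {1..n}" "j' \<in> {1..n}"
    and "(i, j) \<in> extra_points n \<or> (i, j') \<in> extra_points n
         \<or> (i', j) \<in> extra_points n \<or> (i', j') \<in> extra_points n"
  shows "10 \<le> lines_count (KxK_resolving_set n) (i, j) (i', j')"
proof -
  have "3 \<le> row_count (KxK_resolving_set n) i \<or> 3 \<le> row_count (KxK_resolving_set n) i'"
    and "3 \<le> col_count (KxK_resolving_set n) j \<or> 3 \<le> col_count (KxK_resolving_set n) j'"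
    using assms(5) extra_point_line_counts_ge_3 by blast+
  moreover have "2 \<le> row_count (KxK_resolving_set n) i" "2 \<le> row_count (KxK_resolving_set n) i'"
    using KxK_resolving_set_row_count_ge_2 assms(1,2) by blast+
  moreover have "2 \<le> col_count (KxK_resolving_set n) j" "2 \<le> col_count (KxK_resolving_set n) j'"
    using KxK_resolving_set_col_count_ge_2 assms(3,4) by blast+
  ultimately show ?thesis
    unfolding lines_count_def fst_conv snd_conv by linarith
qed

lemma weak_4_resolving_KxK_resolving_set:
  "weak_k_resolving (KxK_V n) KxK_E 4 (KxK_resolving_set n)"
proof (rule weak_4_resolving_KxKI)
  let ?S = "KxK_resolving_set n"
  have range: "i \<in> {1..n}" "j \<in> {1..n}" if "(i, j) \<in> ?S" for i j
    using subsetD[OF KxK_resolving_set_subset that] by (simp_all add: KxK_V_def)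
  show "3 \<le> n" using n by simp
  show "?S \<subseteq> KxK_V n" by (rule KxK_resolving_set_subset)
  show "\<And>i. i \<in> {1..n} \<Longrightarrow> 2 \<le> row_count ?S i" by (rule KxK_resolving_set_row_count_ge_2)
  show "\<And>j. j \<in> {1..n} \<Longrightarrow> 2 \<le> col_count ?S j" by (rule KxK_resolving_set_col_count_ge_2)
  show "9 \<le> lines_count ?S (i, j) (i', j')"
    if ij: "(i, j) \<in> ?S" "(i, j') \<in> ?S" "(i', j) \<in> ?S" and ne: "i \<noteq> i'" "j \<noteq> j'"
    for i i' j j'
  proof (cases "(i, j) \<in> extra_points n \<or> (i, j') \<in> extra_points n \<or> (i', j) \<in> extra_points n")
    case True
    have "10 \<le> lines_count ?S (i, j) (i', j')"
      by (rule lines_count_ge_10_if_extra_corner) (use True range ij in blast)+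
    then show ?thesis by simp
  next
    case False
    then have "(i, j) \<in> cycle_points n" "(i, j') \<in> cycle_points n" "(i', j) \<in> cycle_points n"
      using ij unfolding KxK_resolving_set_def by blast+
    then have "3 \<le> row_count ?S i \<or> 3 \<le> row_count ?S i'
               \<or> 3 \<le> col_count ?S j \<or> 3 \<le> col_count ?S j'"
      using cycle_points_corner_line_ge_3 ne by blast
    moreover have "2 \<le> row_count ?S i" "2 \<le> row_count ?S i'"
      using KxK_resolving_set_row_count_ge_2 range ij by blast+
    moreover have "2 \<le> col_count ?S j" "2 \<le> col_count ?S j'"
      using KxK_resolving_set_col_count_ge_2 range ij by blast+
    ultimately show ?thesis
      unfolding lines_count_def fst_conv snd_conv by linarith
  qed
  show "10 \<le> lines_count ?S (i, j) (i', j')"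
    if ij: "(i, j) \<in> ?S" "(i, j') \<in> ?S" "(i', j) \<in> ?S" "(i', j') \<in> ?S"
      and ne: "i \<noteq> i'" "j \<noteq> j'"
    for i i' j j'
  proof (rule lines_count_ge_10_if_extra_corner)
    show "i \<in> {1..n}" "i' \<in> {1..n}" "j \<in> {1..n}" "j' \<in> {1..n}"
      using range ij by blast+
    have "\<not> ((i, j) \<in> cycle_points n \<and> (i, j') \<in> cycle_points n
              \<and> (i', j) \<in> cycle_points n \<and> (i', j') \<in> cycle_points n)"
      using cycle_points_no_rectangle ne by blast
    then show "(i, j) \<in> extra_points n \<or> (i, j') \<in> extra_points n
          \<or> (i', j) \<in> extra_points n \<or> (i', j') \<in> extra_points n"
      using ij unfolding KxK_resolving_set_def by blast
  qed
qed

end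

theorem mainTheorem5:
  fixes n :: nat
  assumes "n \<ge> 9"
  shows "wdim (KxK_V n) KxK_E 4 \<le> 2 * n + 1 + n div 4"
proof -
  have "weak_k_resolving (KxK_V n) KxK_E 4 (KxK_resolving_set n)"
    using weak_4_resolving_KxK_resolving_set assms by simp
  then have "wdim (KxK_V n) KxK_E 4 \<le> card (KxK_resolving_set n)"
    by (rule wdim_le_card)
  also have "\<dots> \<le> 2 * n + 1 + n div 4"
    by (rule card_KxK_resolving_set)
  finally show ?thesis .
qed

end
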